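(* Let $b$ satisfy (b1)–(b4), $u\in BV(\Omega)\cap L^\infty(\Omega)$, $\lambda\colon\Omega\to[0,1]$ Borel, and let $(u_n)\subset C^\infty(\Omega)\cap BV(\Omega)$ satisfy: $u_n\to u$ strictly in $BV(\Omega)$; $u_n(x)\to u^\lambda(x)$ for $\mathcal H^{N-1}$-a.e. $x\in\Omega$; $\|u_n\|_{L^\infty}\le(1+1/n)\|u\|_{L^\infty}$. Then for every Borel $\Lambda\colon\Omega\to[0,1]$ and every $\varphi\in C^1_c(\Omega)$, $$\lim_{n\to\infty}\int_\Omega\varphi\,d(b(\cdot,u_n),Du_n)_\Lambda=\int_\Omega\varphi\,d(b(\cdot,u),Du)_\lambda .$$
   Context: $\Omega\subseteq\mathbb R^N$ ($N\ge2$) open; $\mathcal{DM}^\infty(\Omega)$ = fields $A\in L^\infty(\Omega;\mathbb R^N)$ with distributional divergence a finite Radon measure. Assumptions on $b\colon\Omega\times\mathbb R\to\mathbb R^N$: (b1) Borel and bounded; (b2) for a.e. $x$, $t\mapsto b(x,t)$ continuous; (b3) $b_t:=b(\cdot,t)\in\mathcal{DM}^\infty(\Omega)$ for all $t$; (b4) $\sigma:=\bigvee_t|\operatorname{div}_xb_t|$ (least upper bound of measures) is a finite Radon measure; $\sigma$ vanishes on $\mathcal H^{N-1}$-null sets. $f(\cdot,t)=d\operatorname{div}_xb_t/d\sigma$, $B(x,t)=\int_0^tb(x,s)ds$, $F(x,t)=\int_0^tf(x,s)ds$. $u^\pm$ approximate upper/lower limits, $u^\lambda=(1-\lambda)u^-+\lambda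 u^+$. $(b(\cdot,u),Du)_\lambda:=-F(x,u^\lambda)\sigma+\operatorname{div}(B(x,u(x)))$. Strict convergence: $u_n\to u$ in $L^1$ and $|Du_n|(\Omega)\to|Du|(\Omega)$. *)

theory Defs
  imports "HOL-Analysis.Analysis" "HOL-Probability.Essential_Supremum"
begin

definition pderiv :: "('a::euclidean_space \<Rightarrow> real) \<Rightarrow> 'a \<Rightarrow> 'a \<Rightarrow> real" where
  "pderiv f i x = frechet_derivative f (at x) i"

definition grad :: "('a::euclidean_space \<Rightarrow> real) \<Rightarrow> 'a \<Rightarrow> 'a" where
  "grad f x = (\<Sum>i\<in>Basis. pderiv f i x *\<^sub>R i)"

definition divg :: "('a::euclidean_space \<Rightarrow> 'a) \<Rightarrow> 'a \<Rightarrow> real" where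
  "divg F x = (\<Sum>i\<in>Basis. pderiv (\<lambda>y. F y \<bullet> i) i x)"

fun Ck :: "nat \<Rightarrow> 'a::euclidean_space set \<Rightarrow> ('a \<Rightarrow> real) \<Rightarrow> bool" where
  "Ck 0 S f = continuous_on S f"
| "Ck (Suc k) S f = ((\<forall>x\<in>S. f differentiable (at x)) \<and> (\<forall>i\<in>Basis. Ck k S (pderiv f i)))"

definition Cinf :: "'a::euclidean_space set \<Rightarrow> ('a \<Rightarrow> real) \<Rightarrow> bool" where
  "Cinf S f = (\<forall>k. Ck k S f)"

definition C1c :: "'a::euclidean_space set \<Rightarrow> ('a \<Rightarrow> real) \<Rightarrow> bool" where
  "C1c \<Omega> \<phi> = (Ck 1 UNIV \<phi> \<and> compact (closure {x. \<phi> x \<noteq> 0}) \<and> closure {x. \<phi> x \<noteq> 0} \<subseteq> \<Omega>)"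

definition C1c_field :: "'a::euclidean_space set \<Rightarrow> ('a \<Rightarrow> 'a) \<Rightarrow> bool" where
  "C1c_field \<Omega> \<phi> = (\<forall>i\<in>Basis. C1c \<Omega> (\<lambda>x. \<phi> x \<bullet> i))"

definition TV :: "'a::euclidean_space set \<Rightarrow> ('a \<Rightarrow> real) \<Rightarrow> ereal" where
  "TV \<Omega> u = (SUP \<phi>\<in>{\<phi>. C1c_field \<Omega> \<phi> \<and> (\<forall>x. norm (\<phi> x) \<le> 1)}.
              ereal (\<integral>x. u x * divg \<phi> x \<partial>(lebesgue_on \<Omega>)))"

definition BV :: "'a::euclidean_space set \<Rightarrow> ('a \<Rightarrow> real) \<Rightarrow> bool" where
  "BV \<Omega> u = (integrable (lebesgue_on \<Omega>) u \<and> TV \<Omega> u < \<infinity>)"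

definition Linf_norm :: "'a::euclidean_space set \<Rightarrow> ('a \<Rightarrow> real) \<Rightarrow> ereal" where
  "Linf_norm \<Omega> u = esssup (lebesgue_on \<Omega>) (\<lambda>x. ereal \<bar>u x\<bar>)"

definition Linf :: "'a::euclidean_space set \<Rightarrow> ('a \<Rightarrow> real) \<Rightarrow> bool" where
  "Linf \<Omega> u = (u \<in> borel_measurable (lebesgue_on \<Omega>) \<and> Linf_norm \<Omega> u < \<infinity>)"

definition strictly_conv :: "'a::euclidean_space set \<Rightarrow> (nat \<Rightarrow> 'a \<Rightarrow> real) \<Rightarrow> ('a \<Rightarrow> real) \<Rightarrow> bool" where
  "strictly_conv \<Omega> v u =
     ((\<lambda>n. \<integral>x. \<bar>v n x - u x\<bar> \<partial>(lebesgue_on \<Omega>)) \<longlonglongrightarrow> 0 \<and>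
      (\<lambda>n. TV \<Omega> (v n)) \<longlonglongrightarrow> TV \<Omega> u)"

definition density_zero :: "'a::euclidean_space set \<Rightarrow> 'a \<Rightarrow> bool" where
  "density_zero E x =
     ((\<lambda>r::real. measure lebesgue (E \<inter> ball x r) / measure lebesgue (ball x r)) \<longlongrightarrow> 0) (at_right 0)"

definition apx_upper :: "'a::euclidean_space set \<Rightarrow> ('a \<Rightarrow> real) \<Rightarrow> 'a \<Rightarrow> ereal" where
  "apx_upper \<Omega> u x = Inf (ereal ` {t. density_zero {y\<in>\<Omega>. u y > t} x})"

definition apx_lower :: "'a::euclidean_space set \<Rightarrow> ('a \<Rightarrow> real) \<Rightarrow> 'a \<Rightarrow> ereal" where
  "apx_lower \<Omega> u x = Sup (ereal ` {t. density_zero {y\<in>\<Omega>. u y < t} x})"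

text \<open>u^\<lambda> = (1-\<lambda>) u^- + \<lambda> u^+ (finite everywhere for u \<in> L^\<infinity>).\<close>
definition u_lam :: "'a::euclidean_space set \<Rightarrow> ('a \<Rightarrow> real) \<Rightarrow> ('a \<Rightarrow> real) \<Rightarrow> 'a \<Rightarrow> real" where
  "u_lam \<Omega> u lam x = (1 - lam x) * real_of_ereal (apx_lower \<Omega> u x) + lam x * real_of_ereal (apx_upper \<Omega> u x)"

definition omega_s :: "real \<Rightarrow> real" where
  "omega_s s = pi powr (s / 2) / Gamma (s / 2 + 1)"

definition hausdorff_pre :: "real \<Rightarrow> real \<Rightarrow> 'a::euclidean_space set \<Rightarrow> ennreal" where
  "hausdorff_pre s \<delta> E = (INF C\<in>{C :: nat \<Rightarrow> 'a set. E \<subseteq> (\<Union>i. C i) \<and>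
        (\<forall>i. bounded (C i) \<and> diameter (C i) \<le> \<delta>)}.
        (\<Sum>i. ennreal (omega_s s * (diameter (C i) / 2) powr s)))"

definition hausdorff :: "real \<Rightarrow> 'a::euclidean_space set \<Rightarrow> ennreal" where
  "hausdorff s E = (SUP \<delta>\<in>{0<..}. hausdorff_pre s \<delta> E)"

definition finite_borel_on :: "'a::euclidean_space set \<Rightarrow> 'a measure \<Rightarrow> bool" where
  "finite_borel_on \<Omega> \<mu> = (sets \<mu> = sets (restrict_space borel \<Omega>) \<and> emeasure \<mu> \<Omega> < \<infinity>)"

text \<open>div A = \<mu>p - \<mu>m in the sense of distributions, with (\<mu>p, \<mu>m) the Jordan
  decomposition (finite, mutually singular Borel measures on \<Omega>);
  hence |div A| = \<mu>p + \<mu>m.\<close>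
definition div_measure :: "'a::euclidean_space set \<Rightarrow> ('a \<Rightarrow> 'a) \<Rightarrow> 'a measure \<Rightarrow> 'a measure \<Rightarrow> bool" where
  "div_measure \<Omega> A \<mu>p \<mu>m =
     (finite_borel_on \<Omega> \<mu>p \<and> finite_borel_on \<Omega> \<mu>m \<and>
      (\<exists>P\<in>sets \<mu>p. emeasure \<mu>p (\<Omega> - P) = 0 \<and> emeasure \<mu>m P = 0) \<and>
      (\<forall>\<phi>. C1c \<Omega> \<phi> \<longrightarrow>
         (\<integral>x. A x \<bullet> grad \<phi> x \<partial>(lebesgue_on \<Omega>)) = - ((\<integral>x. \<phi> x \<partial>\<mu>p) - (\<integral>x. \<phi> x \<partial>\<mu>m))))"

definition is_measure_lub :: "'a::euclidean_space set \<Rightarrow> (real \<Rightarrow> 'a set \<Rightarrow> ennreal) \<Rightarrow> 'a measure \<Rightarrow> bool" where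
  "is_measure_lub \<Omega> \<nu> \<sigma> =
     (sets \<sigma> = sets (restrict_space borel \<Omega>) \<and>
      (\<forall>t. \<forall>E\<in>sets \<sigma>. \<nu> t E \<le> emeasure \<sigma> E) \<and>
      (\<forall>\<rho>. sets \<rho> = sets \<sigma> \<longrightarrow> (\<forall>t. \<forall>E\<in>sets \<sigma>. \<nu> t E \<le> emeasure \<rho> E) \<longrightarrow>
           (\<forall>E\<in>sets \<sigma>. emeasure \<sigma> E \<le> emeasure \<rho> E)))"

definition Bint :: "('a \<Rightarrow> real \<Rightarrow> 'a::euclidean_space) \<Rightarrow> 'a \<Rightarrow> real \<Rightarrow> 'a" where
  "Bint b x t = interval_lebesgue_integral lborel (ereal 0) (ereal t) (\<lambda>s. b x s)"

definition Fint :: "('a \<Rightarrow> real \<Rightarrow> real) \<Rightarrow> 'a \<Rightarrow> real \<Rightarrow> real" where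
  "Fint f x t = interval_lebesgue_integral lborel (ereal 0) (ereal t) (\<lambda>s. f x s)"

text \<open>\<integral>\<phi> d(b(\<cdot>,u),Du)_\<lambda> = -\<integral> \<phi>(x) F(x,u^\<lambda>(x)) d\<sigma> + \<langle>div B(\<cdot>,u(\<cdot>)), \<phi>\<rangle>,
  where the distributional divergence acts by \<langle>div V, \<phi>\<rangle> = -\<integral> V\<cdot>\<nabla>\<phi> dx.\<close>
definition pairing_int ::
  "'a::euclidean_space set \<Rightarrow> ('a \<Rightarrow> real \<Rightarrow> 'a) \<Rightarrow> ('a \<Rightarrow> real \<Rightarrow> real) \<Rightarrow> 'a measure
   \<Rightarrow> ('a \<Rightarrow> real) \<Rightarrow> ('a \<Rightarrow> real) \<Rightarrow> ('a \<Rightarrow> real) \<Rightarrow> real" where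
  "pairing_int \<Omega> b f \<sigma> u lam \<phi> =
     - (\<integral>x. \<phi> x * Fint f x (u_lam \<Omega> u lam x) \<partial>\<sigma>)
     - (\<integral>x. Bint b x (u x) \<bullet> grad \<phi> x \<partial>(lebesgue_on \<Omega>))"

end

(*
  For smooth v_n the approximate limits coincide with v_n, so the pairing of v_n does not
  depend on \<Lambda> and equals  -\<integral>\<phi> F(x, v_n) d\<sigma> - \<integral>B(x, v_n)\<cdot>\<nabla>\<phi> dx.  Since \<sigma> dominates every
  |div b_t|, the density f(\<cdot>, t) is bounded by 1 \<sigma>-a.e., so F(x, \<cdot>) is 1-Lipschitz for
  \<sigma>-a.e. x.  The v_n converge to u^\<lambda> off an H^(N-1)-null set, hence \<sigma>-a.e., and
  |v_n| \<le> 2 \<parallel>u\<parallel>_\<infinity>, so the first term converges by dominated convergence.  B(x, \<cdot>) is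
  Lipschitz with constant sup |b|, so the second term converges because v_n \<rightarrow> u in L^1.
*)
theory Submission
  imports Defs
begin

lemma set_integrable_einterval_bounded:
  fixes h :: "real \<Rightarrow> 'b::{banach, second_countable_topology}"
  assumes h: "h \<in> borel_measurable borel" and bound: "AE s in lborel. norm (h s) \<le> M"
  shows "set_integrable lborel (einterval (ereal a) (ereal c)) h"
  unfolding set_integrable_def
proof (rule integrableI_bounded_set[where A="{a..c}" and B="max M 0"])
  show "AE x in lborel. x \<in> {a..c} \<longrightarrow>
      norm (indicator (einterval (ereal a) (ereal c)) x *\<^sub>R h x) \<le> max M 0"
    using bound by eventually_elim (auto simp: indicator_def max_def, meson norm_le_zero_iff order_trans)
qed (use h in \<open>auto simp: einterval_iff indicator_def emeasure_lborel_Icc_eq\<close>)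

lemma norm_interval_integral_le:
  fixes h :: "real \<Rightarrow> 'b::{banach, second_countable_topology}"
  assumes h: "h \<in> borel_measurable borel" and bound: "AE s in lborel. norm (h s) \<le> M"
    and "a \<le> c"
  shows "norm (interval_lebesgue_integral lborel (ereal a) (ereal c) h) \<le> M * (c - a)"
proof -
  have I: "einterval (ereal a) (ereal c) = {a<..<c}" by (auto simp: einterval_def)
  have int: "set_integrable lborel {a<..<c} h"
    using set_integrable_einterval_bounded[OF h bound, of a c] unfolding I .
  have "norm (interval_lebesgue_integral lborel (ereal a) (ereal c) h) = norm (LINT s:{a<..<c}|lborel. h s)"
    using \<open>a \<le> c\<close> by (simp add: interval_lebesgue_integral_def I)
  also have "\<dots> \<le> (LINT s:{a<..<c}|lborel. norm (h s))"
    by (rule set_integral_norm_bound[OF int])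
  also have "\<dots> \<le> (LINT s:{a<..<c}|lborel. M)"
    using bound \<open>a \<le> c\<close> set_integrable_norm[OF int]
    by (intro set_integral_mono_AE) (auto intro: eventually_mono simp: set_integrable_def)
  also have "\<dots> = M * (c - a)"
    using \<open>a \<le> c\<close> by (simp add: set_lebesgue_integral_def)
  finally show ?thesis .
qed

lemma interval_integral_Lipschitz:
  fixes h :: "real \<Rightarrow> 'b::{banach, second_countable_topology}"
  assumes h: "h \<in> borel_measurable borel" and bound: "AE s in lborel. norm (h s) \<le> M"
  shows "norm (interval_lebesgue_integral lborel (ereal 0) (ereal t) h
             - interval_lebesgue_integral lborel (ereal 0) (ereal t') h) \<le> M * \<bar>t - t'\<bar>"
proof -
  let ?I = "\<lambda>a c. interval_lebesgue_integral lborel (ereal a) (ereal c) h"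
  have "interval_lebesgue_integrable lborel (ereal a) (ereal c) h" for a c
    using set_integrable_einterval_bounded[OF h bound]
    by (simp add: interval_lebesgue_integrable_def)
  then have "?I 0 t' + ?I t' t = ?I 0 t"
    by (intro interval_integral_sum) (simp flip: ereal_min ereal_max)
  then have "norm (?I 0 t - ?I 0 t') = norm (?I t' t)"
    by (metis add_diff_cancel_left')
  also have "\<dots> \<le> M * \<bar>t - t'\<bar>"
  proof (cases "t' \<le> t")
    case True
    then show ?thesis using norm_interval_integral_le[OF h bound True] by simp
  next
    case False
    then show ?thesis
      using norm_interval_integral_le[OF h bound, of t t']
      by (simp add: interval_integral_endpoints_reverse[of "ereal t'" "ereal t"])
  qed
  finally show ?thesis .
qed

lemma measurable_slice_restrict_space:
  fixes g :: "'a::euclidean_space \<Rightarrow> real \<Rightarrow> 'b::{banach, second_countable_topology}"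
  assumes g: "(\<lambda>p. g (fst p) (snd p)) \<in> borel_measurable (restrict_space borel (\<Omega> \<times> UNIV))"
    and "x \<in> \<Omega>"
  shows "g x \<in> borel_measurable borel"
proof -
  have "(\<lambda>s::real. (x, s)) \<in> measurable borel (borel \<Otimes>\<^sub>M borel)"
    by measurable
  then have Pair: "(\<lambda>s. (x, s)) \<in> measurable borel (borel :: ('a \<times> real) measure)"
    by (simp add: borel_prod)
  have "(\<lambda>s::real. (x, s)) \<in> measurable borel (restrict_space borel (\<Omega> \<times> UNIV))"
    by (subst measurable_restrict_space2_iff) (use Pair \<open>x \<in> \<Omega>\<close> in auto)
  from measurable_comp[OF this g] show ?thesis by (simp add: comp_def)
qed

lemma borel_measurable_pair_lborel:
  fixes g :: "'a::euclidean_space \<Rightarrow> real \<Rightarrow> 'b::{banach, second_countable_topology}"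
  assumes g: "(\<lambda>p. g (fst p) (snd p)) \<in> borel_measurable (restrict_space borel (\<Omega> \<times> UNIV))"
    and id: "(\<lambda>x. x) \<in> measurable N borel" and "space N \<subseteq> \<Omega>"
  shows "(\<lambda>p. g (fst p) (snd p)) \<in> borel_measurable (N \<Otimes>\<^sub>M lborel)"
proof -
  have "(\<lambda>p. (fst p, snd p)) \<in> measurable (N \<Otimes>\<^sub>M lborel) (borel \<Otimes>\<^sub>M borel)"
    using measurable_comp[OF measurable_fst id] measurable_snd[of N lborel]
    by (intro measurable_Pair) (simp_all add: comp_def measurable_lborel1)
  then have "(\<lambda>p. p) \<in> measurable (N \<Otimes>\<^sub>M lborel) (restrict_space borel (\<Omega> \<times> UNIV))"
    using \<open>space N \<subseteq> \<Omega>\<close>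
    by (intro measurable_restrict_space2) (auto simp: space_pair_measure borel_prod)
  from measurable_comp[OF this g] show ?thesis by (simp add: comp_def)
qed

lemma borel_measurable_interval_integral_param:
  fixes g :: "'a \<Rightarrow> real \<Rightarrow> 'b::{banach, second_countable_topology}"
  assumes [measurable]: "(\<lambda>p. g (fst p) (snd p)) \<in> borel_measurable (N \<Otimes>\<^sub>M lborel)"
    and [measurable]: "w \<in> borel_measurable N"
  shows "(\<lambda>x. interval_lebesgue_integral lborel (ereal 0) (ereal (w x)) (g x)) \<in> borel_measurable N"
proof -
  have "(\<lambda>x. interval_lebesgue_integral lborel (ereal 0) (ereal (w x)) (g x)) =
    (\<lambda>x. if 0 \<le> w x then \<integral>y. of_bool (0 < y \<and> y < w x) *\<^sub>R g x y \<partial>lborel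
         else - (\<integral>y. of_bool (w x < y \<and> y < 0) *\<^sub>R g x y \<partial>lborel))"
    by (intro ext) (simp add: interval_lebesgue_integral_def set_lebesgue_integral_def einterval_iff indicator_def)
  also have "\<dots> \<in> borel_measurable N"
    by (intro measurable_If lborel.borel_measurable_lebesgue_integral borel_measurable_uminus)
       (auto simp: split_beta')
  finally show ?thesis .
qed

section \<open>Hausdorff null sets\<close>

lemma hausdorff_pre_mono:
  assumes "A \<subseteq> B" shows "hausdorff_pre s \<delta> A \<le> hausdorff_pre s \<delta> B"
  unfolding hausdorff_pre_def using assms by (intro INF_superset_mono) auto

lemma hausdorff_pre_antimono:
  assumes "\<delta> \<le> \<delta>'" shows "hausdorff_pre s \<delta>' A \<le> hausdorff_pre s \<delta> A"
  unfolding hausdorff_pre_def using assms by (intro INF_superset_mono) (auto, meson order_trans)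

lemma hausdorff_mono:
  assumes "A \<subseteq> B" shows "hausdorff s A \<le> hausdorff s B"
  unfolding hausdorff_def using hausdorff_pre_mono[OF assms] by (intro SUP_mono) auto

lemma hausdorff_pre_borel_hull:
  fixes E :: "'a::euclidean_space set"
  assumes "hausdorff_pre s \<delta> E < e"
  obtains H where "H \<in> sets borel" "E \<subseteq> H" "hausdorff_pre s \<delta> H \<le> e"
proof -
  obtain C :: "nat \<Rightarrow> 'a set" where C: "E \<subseteq> (\<Union>i. C i)" "\<And>i. bounded (C i) \<and> diameter (C i) \<le> \<delta>"
    and sum: "(\<Sum>i. ennreal (omega_s s * (diameter (C i) / 2) powr s)) < e"
    using assms unfolding hausdorff_pre_def INF_less_iff by blast
  show ?thesis
  proof
    show "(\<Union>i. closure (C i)) \<in> sets borel"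
      by (intro sets.countable_UN) (auto simp: borel_closed)
    show "E \<subseteq> (\<Union>i. closure (C i))"
      using C(1) closure_subset by blast
    have "hausdorff_pre s \<delta> (\<Union>i. closure (C i))
        \<le> (\<Sum>i. ennreal (omega_s s * (diameter (closure (C i)) / 2) powr s))"
      unfolding hausdorff_pre_def using C(2) by (intro INF_lower) (auto simp: diameter_closure)
    then show "hausdorff_pre s \<delta> (\<Union>i. closure (C i)) \<le> e"
      using sum C(2) by (simp add: diameter_closure)
  qed
qed

lemma hausdorff_null_borel_hull:
  fixes E :: "'a::euclidean_space set"
  assumes "hausdorff s E = 0"
  obtains H where "H \<in> sets borel" "E \<subseteq> H" "hausdorff s H = 0"
proof -
  define d where "d j = inverse (real (Suc j))" for j
  have "hausdorff_pre s (d j) E < ennreal (d j)" for j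
  proof -
    have "hausdorff_pre s (d j) E \<le> hausdorff s E"
      unfolding hausdorff_def d_def by (intro SUP_upper) auto
    then show ?thesis using assms by (simp add: d_def)
  qed
  then have "\<forall>j. \<exists>H. H \<in> sets borel \<and> E \<subseteq> H \<and> hausdorff_pre s (d j) H \<le> ennreal (d j)"
    by (metis hausdorff_pre_borel_hull)
  then obtain H where H: "\<And>j. H j \<in> sets borel" "\<And>j. E \<subseteq> H j"
    "\<And>j. hausdorff_pre s (d j) (H j) \<le> ennreal (d j)"
    by metis
  show ?thesis
  proof
    show "(\<Inter>j. H j) \<in> sets borel" "E \<subseteq> (\<Inter>j. H j)"
      using H(1,2) by auto
    have small: "hausdorff_pre s \<delta> (\<Inter>j. H j) \<le> 0 + ennreal e" if "\<delta> > 0" "e > 0" for \<delta> e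
    proof -
      obtain j where j: "d j < min e \<delta>"
        using reals_Archimedean \<open>\<delta> > 0\<close> \<open>e > 0\<close> unfolding d_def by (metis min_less_iff_conj)
      have "hausdorff_pre s \<delta> (\<Inter>j. H j) \<le> hausdorff_pre s (d j) (H j)"
        using j by (intro order_trans[OF hausdorff_pre_antimono hausdorff_pre_mono]) auto
      also have "\<dots> \<le> ennreal (d j)"
        by (rule H(3))
      also have "\<dots> \<le> 0 + ennreal e"
        using j by (simp add: ennreal_leI)
      finally show ?thesis .
    qed
    have "hausdorff_pre s \<delta> (\<Inter>j. H j) \<le> 0" if "\<delta> > 0" for \<delta>
      using small[OF that] by (rule ennreal_le_epsilon)
    then show "hausdorff s (\<Inter>j. H j) = 0"
      unfolding hausdorff_def by (intro antisym SUP_least) auto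
  qed
qed

lemma AE_if_hausdorff_null_exception:
  fixes \<sigma> :: "'a::euclidean_space measure"
  assumes sets_\<sigma>: "sets \<sigma> = sets (restrict_space borel \<Omega>)"
    and null: "\<And>N. N \<in> sets \<sigma> \<Longrightarrow> hausdorff s N = 0 \<Longrightarrow> emeasure \<sigma> N = 0"
    and "\<exists>E. hausdorff s E = 0 \<and> (\<forall>x\<in>\<Omega> - E. P x)"
  shows "AE x in \<sigma>. P x"
proof -
  obtain E where E: "hausdorff s E = 0" "\<And>x. x \<in> \<Omega> - E \<Longrightarrow> P x"
    using assms(3) by blast
  obtain H where H: "H \<in> sets borel" "E \<subseteq> H" "hausdorff s H = 0"
    using hausdorff_null_borel_hull[OF E(1)] by blast
  have space_\<sigma>: "space \<sigma> = \<Omega>"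
    using sets_eq_imp_space_eq[OF sets_\<sigma>] by (simp add: space_restrict_space)
  have "H \<inter> \<Omega> \<in> sets \<sigma>"
    using H(1) by (auto simp: sets_\<sigma> sets_restrict_space)
  moreover have "hausdorff s (H \<inter> \<Omega>) = 0"
    using hausdorff_mono[of "H \<inter> \<Omega>" H s] H(3) by simp
  ultimately have "AE x in \<sigma>. x \<notin> H \<inter> \<Omega>"
    using null by (intro AE_not_in null_setsI) auto
  then show ?thesis
    using AE_space by eventually_elim (use E(2) H(2) space_\<sigma> in blast)
qed

section \<open>Approximate limits of continuous functions\<close>

lemma continuous_on_open_obtain_ball:
  fixes w :: "'a::euclidean_space \<Rightarrow> real"
  assumes "open \<Omega>" "x \<in> \<Omega>" "continuous_on \<Omega> w" "d > 0"
  obtains e where "e > 0" "ball x e \<subseteq> \<Omega>" "\<And>y. y \<in> ball x e \<Longrightarrow> \<bar>w y - w x\<bar> < d"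
proof -
  have "isCont w x"
    using assms(1-3) continuous_on_eq_continuous_at by blast
  then obtain e1 where e1: "e1 > 0" "\<And>y. dist y x < e1 \<Longrightarrow> dist (w y) (w x) < d"
    using \<open>d > 0\<close> unfolding continuous_at_eps_delta by blast
  obtain e2 where e2: "e2 > 0" "ball x e2 \<subseteq> \<Omega>"
    using assms open_contains_ball by blast
  show ?thesis
  proof (rule that[of "min e1 e2"])
    show "0 < min e1 e2" "ball x (min e1 e2) \<subseteq> \<Omega>"
      using e1(1) e2 subset_ball[of "min e1 e2" e2 x] by auto
    show "\<bar>w y - w x\<bar> < d" if "y \<in> ball x (min e1 e2)" for y
      using e1(2)[of y] that by (simp add: dist_real_def dist_commute)
  qed
qed

lemma measure_ball_pos:
  fixes x :: "'a::euclidean_space"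
  assumes "r > 0"
  shows "measure lebesgue (ball x r) > 0"
  using content_ball_pos[OF assms, of x] by simp

lemma density_zero_if_disjoint_ball:
  fixes x :: "'a::euclidean_space"
  assumes "e > 0" "E \<inter> ball x e = {}"
  shows "density_zero E x"
  unfolding density_zero_def
proof (rule tendsto_eventually)
  show "\<forall>\<^sub>F r in at_right 0. measure lebesgue (E \<inter> ball x r) / measure lebesgue (ball x r) = 0"
    using eventually_at_right_real[OF \<open>e > 0\<close>]
  proof eventually_elim
    case (elim r)
    then have "ball x r \<subseteq> ball x e" by (simp add: subset_ball)
    then have "E \<inter> ball x r = {}" using assms(2) by blast
    then show ?case by simp
  qed
qed

lemma not_density_zero_if_ball_subset:
  fixes x :: "'a::euclidean_space"
  assumes "e > 0" "ball x e \<subseteq> E"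
  shows "\<not> density_zero E x"
proof
  have "\<forall>\<^sub>F r in at_right 0. measure lebesgue (E \<inter> ball x r) / measure lebesgue (ball x r) = 1"
    using eventually_at_right_real[OF \<open>e > 0\<close>]
  proof eventually_elim
    case (elim r)
    then have "E \<inter> ball x r = ball x r"
      using assms(2) subset_ball[of r e x] by auto
    then show ?case
      using measure_ball_pos[of r x] elim by simp
  qed
  then have "((\<lambda>r. measure lebesgue (E \<inter> ball x r) / measure lebesgue (ball x r)) \<longlongrightarrow> 1) (at_right 0)"
    by (rule tendsto_eventually)
  moreover assume "density_zero E x"
  ultimately have "(1::real) = 0"
    unfolding density_zero_def by (rule tendsto_unique[OF trivial_limit_at_right_real])
  then show False
    by simp
qed

lemma Inf_ereal_image_eq:
  assumes "{a<..} \<subseteq> S" "S \<subseteq> {a..}"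
  shows "Inf (ereal ` S) = ereal a"
proof (rule antisym)
  show "Inf (ereal ` S) \<le> ereal a"
  proof (rule dense_ge)
    fix z assume "ereal a < z"
    then show "Inf (ereal ` S) \<le> z"
      using assms(1) by (cases z) (auto intro!: Inf_lower)
  qed
  show "ereal a \<le> Inf (ereal ` S)"
    using assms(2) by (auto intro!: Inf_greatest)
qed

lemma apx_lower_eq_uminus_apx_upper:
  "apx_lower \<Omega> u x = - apx_upper \<Omega> (\<lambda>y. - u y) x"
proof -
  have level: "{y\<in>\<Omega>. t < - u y} = {y\<in>\<Omega>. u y < - t}" for t
    by auto
  have "{t. density_zero {y\<in>\<Omega>. u y < t} x} = uminus ` {t. density_zero {y\<in>\<Omega>. t < - u y} x}"
    unfolding level
  proof (intro set_eqI iffI)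
    fix t assume "t \<in> {t. density_zero {y\<in>\<Omega>. u y < t} x}"
    then show "t \<in> uminus ` {t. density_zero {y\<in>\<Omega>. u y < - t} x}"
      by (intro image_eqI[where x="- t"]) auto
  qed auto
  then have eq: "ereal ` {t. density_zero {y\<in>\<Omega>. u y < t} x}
      = uminus ` ereal ` {t. density_zero {y\<in>\<Omega>. t < - u y} x}"
    by (simp add: image_image)
  show ?thesis
    unfolding apx_lower_def apx_upper_def eq by (rule ereal_Sup_uminus_image_eq)
qed

lemma apx_upper_continuous:
  fixes w :: "'a::euclidean_space \<Rightarrow> real"
  assumes "open \<Omega>" "x \<in> \<Omega>" "continuous_on \<Omega> w"
  shows "apx_upper \<Omega> w x = ereal (w x)"
  unfolding apx_upper_def
proof (rule Inf_ereal_image_eq)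
  show "{w x<..} \<subseteq> {t. density_zero {y\<in>\<Omega>. t < w y} x}"
  proof safe
    fix t assume "w x < t"
    then obtain e where e: "e > 0" "\<And>y. y \<in> ball x e \<Longrightarrow> \<bar>w y - w x\<bar> < t - w x"
      using continuous_on_open_obtain_ball[OF assms, of "t - w x"] by (metis diff_gt_0_iff_gt)
    have "w y < t" if "dist x y < e" for y
      using e(2)[of y] that by (simp add: abs_less_iff)
    then have "{y\<in>\<Omega>. t < w y} \<inter> ball x e = {}"
      by fastforce
    then show "density_zero {y\<in>\<Omega>. t < w y} x"
      by (rule density_zero_if_disjoint_ball[OF e(1)])
  qed
  show "{t. density_zero {y\<in>\<Omega>. t < w y} x} \<subseteq> {w x..}"
  proof (rule subsetI, rule ccontr)
    fix t assume dz: "t \<in> {t. density_zero {y\<in>\<Omega>. t < w y} x}" and "t \<notin> {w x..}"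
    then obtain e where e: "e > 0" "ball x e \<subseteq> \<Omega>" "\<And>y. y \<in> ball x e \<Longrightarrow> \<bar>w y - w x\<bar> < w x - t"
      using continuous_on_open_obtain_ball[OF assms, of "w x - t"] by (metis atLeast_iff diff_gt_0_iff_gt not_le)
    have "t < w y" if "dist x y < e" for y
      using e(3)[of y] that by (simp add: abs_less_iff)
    then have "ball x e \<subseteq> {y\<in>\<Omega>. t < w y}"
      using e(2) by auto
    then have "\<not> density_zero {y\<in>\<Omega>. t < w y} x"
      by (rule not_density_zero_if_ball_subset[OF e(1)])
    with dz show False by simp
  qed
qed

lemma u_lam_continuous:
  fixes w :: "'a::euclidean_space \<Rightarrow> real"
  assumes "open \<Omega>" "x \<in> \<Omega>" "continuous_on \<Omega> w"
  shows "u_lam \<Omega> w l x = w x"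
proof -
  have "apx_upper \<Omega> (\<lambda>y. - w y) x = ereal (- w x)"
    by (rule apx_upper_continuous[OF assms(1,2) continuous_on_minus[OF assms(3)]])
  then have "apx_lower \<Omega> w x = ereal (w x)"
    unfolding apx_lower_eq_uminus_apx_upper by simp
  then show ?thesis
    using apx_upper_continuous[OF assms] by (simp add: u_lam_def algebra_simps)
qed

lemma abs_le_Linf_norm_if_continuous:
  fixes w :: "'a::euclidean_space \<Rightarrow> real"
  assumes "open \<Omega>" "x \<in> \<Omega>" "continuous_on \<Omega> w"
  shows "ereal \<bar>w x\<bar> \<le> Linf_norm \<Omega> w"
proof (rule ccontr)
  assume "\<not> ereal \<bar>w x\<bar> \<le> Linf_norm \<Omega> w"
  then have "Linf_norm \<Omega> w < ereal \<bar>w x\<bar>"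
    by simp
  then obtain c where c: "Linf_norm \<Omega> w < ereal c" "ereal c < ereal \<bar>w x\<bar>"
    using ereal_dense2 by blast
  obtain e where e: "e > 0" "ball x e \<subseteq> \<Omega>" "\<And>y. y \<in> ball x e \<Longrightarrow> \<bar>w y - w x\<bar> < \<bar>w x\<bar> - c"
    using continuous_on_open_obtain_ball[OF assms, of "\<bar>w x\<bar> - c"] c(2) by auto
  have large: "ereal c < ereal \<bar>w y\<bar>" if "y \<in> ball x e" for y
  proof -
    have "\<bar>w x\<bar> - \<bar>w y\<bar> \<le> \<bar>w y - w x\<bar>"
      using abs_triangle_ineq2[of "w x" "w y"] by (simp add: abs_minus_commute)
    then show ?thesis
      using e(3)[OF that] by simp
  qed
  have "AE y in lebesgue_on \<Omega>. ereal \<bar>w y\<bar> \<le> Linf_norm \<Omega> w"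
    unfolding Linf_norm_def by (rule esssup_AE)
  then have "AE y in lebesgue_on \<Omega>. y \<notin> ball x e"
  proof eventually_elim
    case (elim y)
    from elim c(1) have "ereal \<bar>w y\<bar> < ereal c"
      by (rule order.strict_trans1)
    then show ?case
      using large less_asym by blast
  qed
  then have "AE y in lebesgue. y \<in> \<Omega> \<longrightarrow> y \<notin> ball x e"
    using \<open>open \<Omega>\<close> by (subst AE_restrict_space_iff[symmetric]) (auto simp: borel_open)
  then have "AE y in lebesgue. y \<notin> ball x e"
    by eventually_elim (use e(2) in auto)
  then have "ball x e \<in> null_sets lebesgue"
    using AE_iff_null_sets[of "ball x e" lebesgue] by simp
  then show False
    using measure_ball_pos[OF e(1), of x] measure_eq_0_null_sets by fastforce
qed

lemma abs_le_of_Linf_norm_le: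
  fixes w :: "'a::euclidean_space \<Rightarrow> real"
  assumes "open \<Omega>" "x \<in> \<Omega>" "continuous_on \<Omega> w"
    and "Linf_norm \<Omega> w \<le> ereal c * L" "0 < c" "c \<le> C" "L < \<infinity>"
  shows "\<bar>w x\<bar> \<le> C * real_of_ereal L"
proof -
  have le: "ereal \<bar>w x\<bar> \<le> ereal c * L"
    using abs_le_Linf_norm_if_continuous[OF assms(1-3)] assms(4) by (rule order_trans)
  then obtain l where l: "L = ereal l"
    using \<open>L < \<infinity>\<close> \<open>0 < c\<close> by (cases L) auto
  then have "\<bar>w x\<bar> \<le> c * l"
    using le by simp
  moreover have "0 \<le> l"
    using calculation \<open>0 < c\<close> by (metis abs_ge_zero order_trans zero_le_mult_iff not_less)
  ultimately show ?thesis
    using l \<open>c \<le> C\<close> by (simp add: order_trans[OF _ mult_right_mono])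
qed

section \<open>Measurability of approximate limits\<close>

definition density_ratio :: "'a::euclidean_space set \<Rightarrow> 'a \<Rightarrow> real \<Rightarrow> real" where
  "density_ratio E x r = measure lebesgue (E \<inter> ball x r) / measure lebesgue (ball x r)"

lemma density_ratio_nonneg: "0 \<le> density_ratio E x r"
  by (simp add: density_ratio_def)

lemma density_zero_iff_density_ratio:
  "density_zero E x \<longleftrightarrow> (density_ratio E x \<longlongrightarrow> 0) (at_right 0)"
  unfolding density_zero_def density_ratio_def[abs_def] ..

lemma measure_Int_ball_mono:
  fixes x :: "'a::euclidean_space"
  assumes "A \<in> sets lebesgue" "B \<in> sets lebesgue" "A \<subseteq> B" "r \<le> r'"
  shows "measure lebesgue (A \<inter> ball x r) \<le> measure lebesgue (B \<inter> ball x r')"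
proof (rule measure_mono_fmeasurable)
  show "A \<inter> ball x r \<subseteq> B \<inter> ball x r'"
    using assms(3,4) subset_ball by blast
  show "B \<inter> ball x r' \<in> fmeasurable lebesgue"
    using fmeasurable_Int_fmeasurable[OF lmeasurable_ball assms(2)] by (simp add: Int_commute)
qed (use assms(1) in auto)

lemma density_zero_subset:
  fixes A B :: "'a::euclidean_space set"
  assumes "A \<in> sets lebesgue" "B \<in> sets lebesgue" "A \<subseteq> B" "density_zero B x"
  shows "density_zero A x"
  unfolding density_zero_iff_density_ratio
proof (rule tendsto_sandwich[where f="\<lambda>_. 0" and h="density_ratio B x"])
  show "\<forall>\<^sub>F r in at_right 0. 0 \<le> density_ratio A x r"
    by (simp add: density_ratio_nonneg)
  show "\<forall>\<^sub>F r in at_right 0. density_ratio A x r \<le> density_ratio B x r"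
    unfolding density_ratio_def
    by (intro always_eventually allI divide_right_mono measure_Int_ball_mono[OF assms(1-3) order_refl]) simp
  show "(density_ratio B x \<longlongrightarrow> 0) (at_right 0)"
    using assms(4) unfolding density_zero_iff_density_ratio .
qed simp

lemma density_ratio_doubling:
  fixes E :: "'a::euclidean_space set"
  assumes E: "E \<in> sets lebesgue" and "0 < r" "r \<le> a" "a \<le> 2 * r"
  shows "density_ratio E x r \<le> 2 ^ DIM('a) * density_ratio E x a"
proof -
  let ?c = "measure lborel (ball (0::'a) 1)" and ?n = "DIM('a)"
  have c: "?c > 0"
    by (rule content_ball_pos) simp
  have ball: "measure lebesgue (ball x s) = s ^ ?n * ?c" if "0 \<le> s" for s
    using content_ball_conv_unit_ball[OF that, of x] by simp
  have "density_ratio E x r \<le> measure lebesgue (E \<inter> ball x a) / (r ^ ?n * ?c)"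
    unfolding density_ratio_def ball[OF less_imp_le[OF \<open>0 < r\<close>]]
    using measure_Int_ball_mono[OF E E order_refl \<open>r \<le> a\<close>] c \<open>0 < r\<close>
    by (intro divide_right_mono) auto
  also have "\<dots> = (a ^ ?n / r ^ ?n) * density_ratio E x a"
    using \<open>0 < r\<close> \<open>r \<le> a\<close> c by (simp add: density_ratio_def content_ball_conv_unit_ball[of a x])
  also have "\<dots> \<le> 2 ^ ?n * density_ratio E x a"
  proof (rule mult_right_mono)
    have "a ^ ?n \<le> (2 * r) ^ ?n"
      using \<open>0 < r\<close> \<open>r \<le> a\<close> \<open>a \<le> 2 * r\<close> by (intro power_mono) auto
    then show "a ^ ?n / r ^ ?n \<le> 2 ^ ?n"
      using \<open>0 < r\<close> by (simp add: divide_le_eq power_mult_distrib)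
  qed (rule density_ratio_nonneg)
  finally show ?thesis .
qed

lemma obtain_inverse_Suc_bracket:
  assumes "0 < r" "r < inverse (real (Suc K))"
  obtains k where "K \<le> k" "inverse (real (Suc (Suc k))) < r" "r \<le> inverse (real (Suc k))"
proof
  define k where "k = nat \<lfloor>1 / r\<rfloor> - 1"
  have "real (Suc K) < 1 / r"
    using assms by (simp add: field_simps)
  then have K: "int (Suc K) \<le> \<lfloor>1 / r\<rfloor>"
    by (simp add: le_floor_iff)
  then show "K \<le> k"
    unfolding k_def by linarith
  have k: "real (Suc k) = of_int \<lfloor>1 / r\<rfloor>"
    unfolding k_def using K by linarith
  have "real (Suc k) \<le> 1 / r"
    unfolding k by (rule of_int_floor_le)
  moreover have "1 / r < real (Suc (Suc k))"
    using real_of_int_floor_add_one_gt[of "1 / r"] k by linarith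
  ultimately
  show "inverse (real (Suc (Suc k))) < r" "r \<le> inverse (real (Suc k))"
    using \<open>0 < r\<close> by (simp_all add: field_simps)
qed

lemma density_zero_iff_sequentially:
  fixes E :: "'a::euclidean_space set"
  assumes E: "E \<in> sets lebesgue"
  shows "density_zero E x \<longleftrightarrow> (\<lambda>k. density_ratio E x (inverse (real (Suc k)))) \<longlonglongrightarrow> 0"
proof
  assume "density_zero E x"
  moreover have "filterlim (\<lambda>k. inverse (real (Suc k))) (at_right 0) sequentially"
    by (rule tendsto_imp_filterlim_at_right[OF LIMSEQ_inverse_real_of_nat]) simp
  ultimately show "(\<lambda>k. density_ratio E x (inverse (real (Suc k)))) \<longlonglongrightarrow> 0"
    unfolding density_zero_iff_density_ratio by (rule filterlim_compose)
next
  assume lim: "(\<lambda>k. density_ratio E x (inverse (real (Suc k)))) \<longlonglongrightarrow> 0"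
  show "density_zero E x"
    unfolding density_zero_iff_density_ratio tendsto_iff
  proof (intro allI impI)
    fix e :: real assume "e > 0"
    then have "e / 2 ^ DIM('a) > 0" by simp
    then obtain K where K: "\<And>k. K \<le> k \<Longrightarrow> dist (density_ratio E x (inverse (real (Suc k)))) 0 < e / 2 ^ DIM('a)"
      using lim unfolding lim_sequentially by blast
    have "\<forall>\<^sub>F r in at_right 0. r \<in> {0<..<inverse (real (Suc K))}"
      by (rule eventually_at_right_real) simp
    then show "\<forall>\<^sub>F r in at_right 0. dist (density_ratio E x r) 0 < e"
    proof eventually_elim
      case (elim r)
      then obtain k where k: "K \<le> k" "inverse (real (Suc (Suc k))) < r" "r \<le> inverse (real (Suc k))"
        using obtain_inverse_Suc_bracket by auto
      have "inverse (real (Suc k)) \<le> 2 * inverse (real (Suc (Suc k)))"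
        by (simp add: field_simps)
      then have "density_ratio E x r \<le> 2 ^ DIM('a) * density_ratio E x (inverse (real (Suc k)))"
        using k elim by (intro density_ratio_doubling[OF E]) auto
      also have "\<dots> < e"
        using K[OF k(1)] by (simp add: dist_real_def abs_of_nonneg[OF density_ratio_nonneg] field_simps)
      finally show ?case
        by (simp add: dist_real_def abs_of_nonneg[OF density_ratio_nonneg])
    qed
  qed
qed

lemma borel_measurable_measure_Int_ball:
  fixes E :: "'a::euclidean_space set"
  assumes "E \<in> sets lebesgue"
  shows "(\<lambda>x. measure lebesgue (E \<inter> ball x r)) \<in> borel_measurable borel"
proof -
  obtain S N N' where SN: "E = S \<union> N" "N \<subseteq> N'" "N' \<in> null_sets lborel" "S \<in> sets borel"
    using sets_completionE[OF assms] by auto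
  have "measure lebesgue (E \<inter> ball x r) = measure lborel (S \<inter> ball x r)" for x
  proof -
    have "N \<inter> ball x r \<in> null_sets lebesgue"
      using SN(2,3) by (intro null_sets_completion_subset[OF _ null_sets_completionI[OF SN(3)]]) auto
    moreover have "E \<inter> ball x r = (S \<inter> ball x r) \<union> (N \<inter> ball x r)"
      using SN(1) by auto
    ultimately show ?thesis
      using SN(4) by (simp add: measure_Un_null_set)
  qed
  moreover
  define Q where "Q = {p :: 'a \<times> 'a. snd p \<in> S \<and> dist (fst p) (snd p) < r}"
  have "Q \<in> sets (borel \<Otimes>\<^sub>M lborel)"
  proof -
    have "Q = {p \<in> space (borel \<Otimes>\<^sub>M lborel). snd p \<in> S \<and> dist (fst p) (snd p) < r}"
      unfolding Q_def by (simp add: space_pair_measure)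
    also have "\<dots> \<in> sets (borel \<Otimes>\<^sub>M lborel)"
      using SN(4) by measurable
    finally show ?thesis .
  qed
  then have "(\<lambda>x. emeasure lborel (Pair x -` Q)) \<in> borel_measurable borel"
    by (rule lborel.measurable_emeasure_Pair)
  moreover have "Pair x -` Q = S \<inter> ball x r" for x
    unfolding Q_def by (auto simp: ball_def)
  ultimately show ?thesis
    by (simp add: measure_def)
qed

lemma sets_density_zero:
  fixes E :: "'a::euclidean_space set"
  assumes E: "E \<in> sets lebesgue"
  shows "{x. density_zero E x} \<in> sets borel"
proof -
  have "(\<lambda>x. density_ratio E x r) =
      (\<lambda>x. measure lebesgue (E \<inter> ball x r) / (r ^ DIM('a) * measure lborel (ball (0::'a) 1)))"
    if "r \<ge> 0" for r
    by (simp add: density_ratio_def fun_eq_iff content_ball_conv_unit_ball[OF that])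
  then have "(\<lambda>x. density_ratio E x (inverse (real (Suc k)))) \<in> borel_measurable borel" for k
    using borel_measurable_measure_Int_ball[OF E] by simp
  then have "Measurable.pred borel (\<lambda>x. (\<lambda>k. density_ratio E x (inverse (real (Suc k)))) \<longlonglongrightarrow> 0)"
    by measurable
  then show ?thesis
    by (simp add: density_zero_iff_sequentially[OF E] pred_def)
qed

lemma borel_measurable_apx_upper:
  fixes u :: "'a::euclidean_space \<Rightarrow> real"
  assumes \<Omega>: "\<Omega> \<in> sets lebesgue" and u: "u \<in> borel_measurable (lebesgue_on \<Omega>)"
  shows "apx_upper \<Omega> u \<in> borel_measurable borel"
proof (rule borel_measurableI_less)
  fix y :: ereal
  have level: "{z\<in>\<Omega>. t < u z} \<in> sets lebesgue" for t
  proof -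
    have "{z\<in>space (lebesgue_on \<Omega>). t < u z} \<in> sets (lebesgue_on \<Omega>)"
      using u by measurable
    then show ?thesis using \<Omega> by (simp add: sets_restrict_space_iff)
  qed
  have "{x \<in> space borel. apx_upper \<Omega> u x < y}
      = (\<Union>q\<in>{q\<in>\<rat>. ereal q < y}. {x. density_zero {z\<in>\<Omega>. q < u z} x})"
  proof (intro set_eqI iffI)
    fix x assume "x \<in> {x \<in> space borel. apx_upper \<Omega> u x < y}"
    then obtain t where t: "density_zero {z\<in>\<Omega>. t < u z} x" "ereal t < y"
      unfolding apx_upper_def Inf_less_iff by auto
    obtain s where s: "t < s" "ereal s < y"
      using ereal_dense2[OF t(2)] by auto
    obtain q where q: "q \<in> \<rat>" "t < q" "q < s"
      using Rats_dense_in_real[OF s(1)] by blast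
    have "density_zero {z\<in>\<Omega>. q < u z} x"
      using q(2) by (intro density_zero_subset[OF level level _ t(1)]) auto
    moreover have "ereal q < y"
      using q(3) s(2) by (metis order.strict_trans less_ereal.simps(1))
    ultimately show "x \<in> (\<Union>q\<in>{q\<in>\<rat>. ereal q < y}. {x. density_zero {z\<in>\<Omega>. q < u z} x})"
      using q(1) by blast
  next
    fix x assume "x \<in> (\<Union>q\<in>{q\<in>\<rat>. ereal q < y}. {x. density_zero {z\<in>\<Omega>. q < u z} x})"
    then obtain q where "ereal q < y" "density_zero {z\<in>\<Omega>. q < u z} x"
      by blast
    then show "x \<in> {x \<in> space borel. apx_upper \<Omega> u x < y}"
      unfolding apx_upper_def by (auto intro: order.strict_trans1 Inf_lower)
  qed
  also have "\<dots> \<in> sets borel"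
    using sets_density_zero[OF level] by (intro sets.countable_UN' countable_subset[OF _ countable_rat]) auto
  finally show "{x \<in> space borel. apx_upper \<Omega> u x < y} \<in> sets borel" .
qed

lemma borel_measurable_u_lam:
  fixes u :: "'a::euclidean_space \<Rightarrow> real"
  assumes \<Omega>: "\<Omega> \<in> sets lebesgue" and u: "u \<in> borel_measurable (lebesgue_on \<Omega>)"
    and lam: "lam \<in> borel_measurable (restrict_space borel \<Omega>)"
  shows "u_lam \<Omega> u lam \<in> borel_measurable (restrict_space borel \<Omega>)"
proof -
  have [measurable]: "apx_upper \<Omega> u \<in> borel_measurable (restrict_space borel \<Omega>)"
    "apx_upper \<Omega> (\<lambda>y. - u y) \<in> borel_measurable (restrict_space borel \<Omega>)"
    using u by (auto intro!: measurable_restrict_space1 borel_measurable_apx_upper[OF \<Omega>] borel_measurable_uminus)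
  show ?thesis
    unfolding u_lam_def[abs_def] apx_lower_eq_uminus_apx_upper
    using lam by measurable
qed

section \<open>Densities with respect to a dominating measure\<close>

lemma AE_le_if_set_integral_le:
  fixes g :: "'a \<Rightarrow> real"
  assumes "finite_measure M" and g: "integrable M g"
    and le: "\<And>E. E \<in> sets M \<Longrightarrow> (\<integral>x\<in>E. g x \<partial>M) \<le> c * measure M E"
  shows "AE x in M. g x \<le> c"
proof -
  interpret finite_measure M by fact
  define E where "E = {x\<in>space M. c < g x}"
  have [measurable]: "g \<in> borel_measurable M"
    using g by (rule borel_measurable_integrable)
  have E: "E \<in> sets M"
    unfolding E_def by measurable
  have int: "integrable M (\<lambda>x. indicator E x * (g x - c))"
    using g E by (intro integrable_mult_indicator[where 'b=real, simplified]) auto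
  have nonneg: "AE x in M. 0 \<le> indicator E x * (g x - c)"
    by (auto simp: E_def indicator_def)
  have "(\<integral>x. indicator E x * (g x - c) \<partial>M) = (\<integral>x. indicator E x * g x - indicator E x * c \<partial>M)"
    by (simp add: right_diff_distrib)
  also have "\<dots> = (\<integral>x. indicator E x * g x \<partial>M) - (\<integral>x. indicator E x * c \<partial>M)"
    using g E by (intro Bochner_Integration.integral_diff integrable_mult_indicator[where 'b=real, simplified]) auto
  also have "\<dots> = (\<integral>x\<in>E. g x \<partial>M) - c * measure M E"
    using E sets.sets_into_space[OF E] by (simp add: set_lebesgue_integral_def Int_absorb2)
  finally have "(\<integral>x. indicator E x * (g x - c) \<partial>M) = (\<integral>x\<in>E. g x \<partial>M) - c * measure M E" .
  then have "(\<integral>x. indicator E x * (g x - c) \<partial>M) = 0"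
    using le[OF E] integral_nonneg_AE[OF nonneg] by linarith
  then have "AE x in M. indicator E x * (g x - c) = 0"
    using integral_nonneg_eq_0_iff_AE[OF int nonneg] by simp
  then show ?thesis
    using AE_space by eventually_elim (auto simp: E_def indicator_def split: if_splits)
qed

lemma AE_abs_density_le_1:
  fixes g :: "'a \<Rightarrow> real"
  assumes "finite_measure M"
    and dominated: "\<And>E. E \<in> sets M \<Longrightarrow> emeasure \<mu>p E + emeasure \<mu>m E \<le> emeasure M E"
    and g: "integrable M g"
    and density: "\<And>E. E \<in> sets M \<Longrightarrow> (\<integral>x\<in>E. g x \<partial>M) = measure \<mu>p E - measure \<mu>m E"
  shows "AE x in M. \<bar>g x\<bar> \<le> 1"
proof -
  interpret finite_measure M by fact
  have le: "measure \<mu>p E \<le> measure M E" "measure \<mu>m E \<le> measure M E" if "E \<in> sets M" for E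
  proof -
    have "emeasure \<mu>p E \<le> emeasure \<mu>p E + emeasure \<mu>m E" "emeasure \<mu>m E \<le> emeasure \<mu>p E + emeasure \<mu>m E"
      by (rule add_increasing2[OF zero_le order_refl], rule add_increasing[OF zero_le order_refl])
    then have "emeasure \<mu>p E \<le> emeasure M E" "emeasure \<mu>m E \<le> emeasure M E"
      using dominated[OF that] by (blast intro: order_trans)+
    moreover have "emeasure M E < top"
      by (simp add: top.not_eq_extremum[symmetric])
    ultimately show "measure \<mu>p E \<le> measure M E" "measure \<mu>m E \<le> measure M E"
      unfolding measure_def by (blast intro: enn2real_mono)+
  qed
  have "AE x in M. g x \<le> 1"
  proof (rule AE_le_if_set_integral_le[OF assms(1) g])
    fix E assume E: "E \<in> sets M"
    show "(\<integral>x\<in>E. g x \<partial>M) \<le> 1 * measure M E"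
      using density[OF E] le(1)[OF E] measure_nonneg[of \<mu>m E] by linarith
  qed
  moreover have "AE x in M. - g x \<le> 1"
  proof (rule AE_le_if_set_integral_le[OF assms(1) integrable_minus[OF g]])
    fix E assume E: "E \<in> sets M"
    have "(\<integral>x\<in>E. - g x \<partial>M) = - (\<integral>x\<in>E. g x \<partial>M)"
      by (simp add: set_lebesgue_integral_def)
    then show "(\<integral>x\<in>E. - g x \<partial>M) \<le> 1 * measure M E"
      using density[OF E] le(2)[OF E] measure_nonneg[of \<mu>p E] by linarith
  qed
  ultimately show ?thesis
    by eventually_elim (simp add: abs_le_iff)
qed

lemma finite_measure_is_measure_lub:
  assumes "is_measure_lub \<Omega> \<nu> \<sigma>" and "emeasure \<sigma> \<Omega> < \<infinity>"
  shows "finite_measure \<sigma>" "sets \<sigma> = sets (restrict_space borel \<Omega>)" "space \<sigma> = \<Omega>"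
proof -
  show sets_\<sigma>: "sets \<sigma> = sets (restrict_space borel \<Omega>)"
    using assms(1) unfolding is_measure_lub_def by blast
  show space_\<sigma>: "space \<sigma> = \<Omega>"
    using sets_eq_imp_space_eq[OF sets_\<sigma>] by (simp add: space_restrict_space)
  show "finite_measure \<sigma>"
    using assms(2) space_\<sigma> by (intro finite_measureI) simp
qed

lemma AE_abs_divergence_density_le_1:
  fixes f :: "'a::euclidean_space \<Rightarrow> real \<Rightarrow> real"
  assumes lub: "is_measure_lub \<Omega> (\<lambda>t E. emeasure (\<mu>p t) E + emeasure (\<mu>m t) E) \<sigma>"
    and fin: "emeasure \<sigma> \<Omega> < \<infinity>"
    and density: "integrable \<sigma> (\<lambda>x. f x t) \<and>
      (\<forall>E\<in>sets \<sigma>. (\<integral>x\<in>E. f x t \<partial>\<sigma>) = measure (\<mu>p t) E - measure (\<mu>m t) E)"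
  shows "AE x in \<sigma>. \<bar>f x t\<bar> \<le> 1"
proof (rule AE_abs_density_le_1[OF finite_measure_is_measure_lub(1)[OF lub fin]])
  show "emeasure (\<mu>p t) E + emeasure (\<mu>m t) E \<le> emeasure \<sigma> E" if "E \<in> sets \<sigma>" for E
    using lub that unfolding is_measure_lub_def by blast
qed (use density in blast)+

lemma continuous_on_if_Cinf:
  assumes "Cinf S f"
  shows "continuous_on S f"
proof -
  have "Ck 0 S f"
    using assms unfolding Cinf_def by blast
  then show ?thesis
    by simp
qed

lemma bounded_if_compact_support:
  fixes g :: "'a::euclidean_space \<Rightarrow> 'b::real_normed_vector"
  assumes "continuous_on UNIV g" "compact K" "\<And>x. x \<notin> K \<Longrightarrow> g x = 0"
  obtains B where "\<And>x. norm (g x) \<le> B"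
proof -
  have "bounded (g ` K)"
    using assms by (intro compact_imp_bounded compact_continuous_image) (auto intro: continuous_on_subset)
  then obtain B where "\<And>x. x \<in> K \<Longrightarrow> norm (g x) \<le> B"
    unfolding bounded_iff by blast
  then show ?thesis
    using assms(3) by (intro that[of "max B 0"]) (metis max.coboundedI1 max.cobounded2 norm_zero)
qed

lemma C1cD:
  fixes \<phi> :: "'a::euclidean_space \<Rightarrow> real"
  assumes "C1c \<Omega> \<phi>"
  shows "\<And>x. \<phi> differentiable (at x)" "\<And>i. i \<in> Basis \<Longrightarrow> continuous_on UNIV (pderiv \<phi> i)"
    and "compact (closure {x. \<phi> x \<noteq> 0})"
proof -
  have "Ck (Suc 0) UNIV \<phi>" and "compact (closure {x. \<phi> x \<noteq> 0})"
    using assms unfolding C1c_def by (simp_all only: One_nat_def)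
  then show "\<And>x. \<phi> differentiable (at x)" "\<And>i. i \<in> Basis \<Longrightarrow> continuous_on UNIV (pderiv \<phi> i)"
    and "compact (closure {x. \<phi> x \<noteq> 0})"
    by (simp_all only: Ck.simps) blast+
qed

lemma C1c_continuous:
  fixes \<phi> :: "'a::euclidean_space \<Rightarrow> real"
  assumes "C1c \<Omega> \<phi>"
  shows "continuous_on UNIV \<phi>" "continuous_on UNIV (grad \<phi>)"
proof -
  show "continuous_on UNIV \<phi>"
    using C1cD(1)[OF assms] by (auto intro: continuous_at_imp_continuous_on differentiable_imp_continuous_within)
  show "continuous_on UNIV (grad \<phi>)"
    unfolding grad_def[abs_def] using C1cD(2)[OF assms] by (intro continuous_intros) auto
qed

lemma C1c_bounded:
  fixes \<phi> :: "'a::euclidean_space \<Rightarrow> real"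
  assumes "C1c \<Omega> \<phi>"
  obtains B where "\<And>x. \<bar>\<phi> x\<bar> \<le> B" "\<And>x. norm (grad \<phi> x) \<le> B"
proof -
  define K where "K = closure {x. \<phi> x \<noteq> 0}"
  have K: "compact K"
    unfolding K_def by (rule C1cD(3)[OF assms])
  note diff = C1cD(1)[OF assms]
  have zero: "\<phi> x = 0" if "x \<notin> K" for x
    using that closure_subset[of "{x. \<phi> x \<noteq> 0}"] unfolding K_def by blast
  have "grad \<phi> x = 0" if "x \<notin> K" for x
  proof -
    have "open (- K)"
      using K compact_imp_closed by blast
    have d1: "(\<phi> has_derivative frechet_derivative \<phi> (at x)) (at x)"
      using diff[of x] frechet_derivative_works by blast
    have d2: "(\<phi> has_derivative (\<lambda>_. 0)) (at x)"
    proof (rule has_derivative_transform_within_open[OF has_derivative_const \<open>open (- K)\<close>])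
      show "x \<in> - K"
        using that by simp
      show "\<And>y. y \<in> - K \<Longrightarrow> 0 = \<phi> y"
        using zero by simp
    qed
    have "frechet_derivative \<phi> (at x) = (\<lambda>_. 0)"
      using has_derivative_unique[OF d1 d2] .
    then show ?thesis
      by (simp add: grad_def pderiv_def)
  qed
  then obtain B2 where B2: "\<And>x. norm (grad \<phi> x) \<le> B2"
    using bounded_if_compact_support[OF C1c_continuous(2)[OF assms] K] by blast
  obtain B1 where B1: "\<And>x. norm (\<phi> x) \<le> B1"
    using bounded_if_compact_support[OF C1c_continuous(1)[OF assms] K zero] by blast
  show ?thesis
  proof (rule that[of "max B1 B2"])
    show "\<bar>\<phi> x\<bar> \<le> max B1 B2" for x
      using order_trans[OF B1[of x] max.cobounded1] by (simp only: real_norm_def)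
    show "norm (grad \<phi> x) \<le> max B1 B2" for x
      using B2[of x] by simp
  qed
qed

section \<open>Convergence of integrals of Lipschitz integrands\<close>

lemma tendsto_integral_Lipschitz_comp_L1:
  fixes G :: "'a \<Rightarrow> real \<Rightarrow> real"
  assumes Lipschitz: "\<And>x s t. x \<in> space M \<Longrightarrow> \<bar>G x s - G x t\<bar> \<le> L * \<bar>s - t\<bar>"
    and zero: "\<And>x. x \<in> space M \<Longrightarrow> G x 0 = 0"
    and meas: "\<And>w. w \<in> borel_measurable M \<Longrightarrow> (\<lambda>x. G x (w x)) \<in> borel_measurable M"
    and w: "\<And>n. integrable M (w n)" and u: "integrable M u"
    and L1: "(\<lambda>n. \<integral>x. \<bar>w n x - u x\<bar> \<partial>M) \<longlonglongrightarrow> 0"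
  shows "(\<lambda>n. \<integral>x. G x (w n x) \<partial>M) \<longlonglongrightarrow> (\<integral>x. G x (u x) \<partial>M)"
proof -
  have int: "integrable M (\<lambda>x. G x (v x))" if v: "integrable M v" for v
  proof (rule Bochner_Integration.integrable_bound[where f="\<lambda>x. L * \<bar>v x\<bar>"])
    show "AE x in M. norm (G x (v x)) \<le> norm (L * \<bar>v x\<bar>)"
    proof (rule AE_I2)
      fix x assume "x \<in> space M"
      then have "\<bar>G x (v x)\<bar> \<le> L * \<bar>v x\<bar>"
        using Lipschitz[of x "v x" 0] zero by simp
      moreover have "L * \<bar>v x\<bar> \<le> \<bar>L\<bar> * \<bar>v x\<bar>"
        by (intro mult_right_mono) auto
      ultimately show "norm (G x (v x)) \<le> norm (L * \<bar>v x\<bar>)"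
        by (simp add: abs_mult)
    qed
  qed (use v meas borel_measurable_integrable in auto)
  have bound: "\<bar>(\<integral>x. G x (w n x) \<partial>M) - (\<integral>x. G x (u x) \<partial>M)\<bar> \<le> L * (\<integral>x. \<bar>w n x - u x\<bar> \<partial>M)" for n
  proof -
    have "\<bar>(\<integral>x. G x (w n x) \<partial>M) - (\<integral>x. G x (u x) \<partial>M)\<bar> = \<bar>\<integral>x. G x (w n x) - G x (u x) \<partial>M\<bar>"
      using int[OF w] int[OF u] by simp
    also have "\<dots> \<le> (\<integral>x. \<bar>G x (w n x) - G x (u x)\<bar> \<partial>M)"
      by (rule integral_abs_bound)
    also have "\<dots> \<le> (\<integral>x. L * \<bar>w n x - u x\<bar> \<partial>M)"
      using int[OF w] int[OF u] w u Lipschitz by (intro integral_mono) auto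
    finally show ?thesis
      by simp
  qed
  have "(\<lambda>n. (\<integral>x. G x (w n x) \<partial>M) - (\<integral>x. G x (u x) \<partial>M)) \<longlonglongrightarrow> 0"
  proof (rule Lim_null_comparison[OF always_eventually])
    show "\<forall>n. norm ((\<integral>x. G x (w n x) \<partial>M) - (\<integral>x. G x (u x) \<partial>M)) \<le> L * (\<integral>x. \<bar>w n x - u x\<bar> \<partial>M)"
      using bound by simp
  qed (rule tendsto_mult_right_zero[OF L1])
  then show ?thesis
    by (rule LIM_zero_cancel)
qed

lemma tendsto_integral_Lipschitz_comp_AE:
  fixes G :: "'a \<Rightarrow> real \<Rightarrow> real"
  assumes "finite_measure M"
    and Lipschitz: "AE x in M. \<forall>s t. \<bar>G x s - G x t\<bar> \<le> L * \<bar>s - t\<bar>"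
    and zero: "\<And>x. x \<in> space M \<Longrightarrow> G x 0 = 0"
    and meas: "\<And>w. w \<in> borel_measurable M \<Longrightarrow> (\<lambda>x. G x (w x)) \<in> borel_measurable M"
    and w: "\<And>n. w n \<in> borel_measurable M" and u: "u \<in> borel_measurable M"
    and bound: "\<And>n x. x \<in> space M \<Longrightarrow> \<bar>w n x\<bar> \<le> K"
    and conv: "AE x in M. (\<lambda>n. w n x) \<longlonglongrightarrow> u x"
  shows "(\<lambda>n. \<integral>x. G x (w n x) \<partial>M) \<longlonglongrightarrow> (\<integral>x. G x (u x) \<partial>M)"
proof (rule integral_dominated_convergence[where w="\<lambda>_. \<bar>L\<bar> * K"])
  interpret finite_measure M by fact
  show "integrable M (\<lambda>_. \<bar>L\<bar> * K)"
    by simp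
  show "AE x in M. norm (G x (w n x)) \<le> \<bar>L\<bar> * K" for n
    using Lipschitz AE_space
  proof eventually_elim
    case (elim x)
    then have "\<bar>G x (w n x) - G x 0\<bar> \<le> L * \<bar>w n x - 0\<bar>"
      by blast
    then have "\<bar>G x (w n x)\<bar> \<le> L * \<bar>w n x\<bar>"
      using zero[OF elim(2)] by simp
    also have "\<dots> \<le> \<bar>L\<bar> * K"
      using bound[OF elim(2), of n] by (intro mult_mono) auto
    finally show ?case by simp
  qed
  show "AE x in M. (\<lambda>n. G x (w n x)) \<longlonglongrightarrow> G x (u x)"
    using Lipschitz conv
  proof eventually_elim
    case (elim x)
    have "(\<lambda>n. G x (w n x) - G x (u x)) \<longlonglongrightarrow> 0"
    proof (rule Lim_null_comparison[OF always_eventually])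
      show "\<forall>n. norm (G x (w n x) - G x (u x)) \<le> L * \<bar>w n x - u x\<bar>"
        using elim(1) by simp
    qed (rule tendsto_mult_right_zero[OF tendsto_rabs_zero[OF LIM_zero[OF elim(2)]]])
    then show ?case
      by (rule LIM_zero_cancel)
  qed
qed (use meas w u in auto)

lemma AE_Fint_Lipschitz:
  fixes f :: "'a::euclidean_space \<Rightarrow> real \<Rightarrow> real"
  assumes "finite_measure \<sigma>" and sets_\<sigma>: "sets \<sigma> = sets (restrict_space borel \<Omega>)"
    and f_meas: "(\<lambda>p. f (fst p) (snd p)) \<in> borel_measurable (restrict_space borel (\<Omega> \<times> UNIV))"
    and f_bound: "\<And>t. AE x in \<sigma>. \<bar>f x t\<bar> \<le> 1"
  shows "AE x in \<sigma>. \<forall>s t. \<bar>Fint f x s - Fint f x t\<bar> \<le> \<bar>s - t\<bar>"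
proof -
  interpret finite_measure \<sigma> by fact
  interpret pair_sigma_finite \<sigma> lborel
    by (intro pair_sigma_finite.intro sigma_finite_measure_axioms lborel.sigma_finite_measure_axioms)
  have space_\<sigma>: "space \<sigma> = \<Omega>"
    using sets_eq_imp_space_eq[OF sets_\<sigma>] by (simp add: space_restrict_space)
  have "(\<lambda>x. x) \<in> measurable \<sigma> borel"
    by (subst measurable_cong_sets[OF sets_\<sigma> refl]) (simp add: measurable_restrict_space1)
  then have "(\<lambda>p. f (fst p) (snd p)) \<in> borel_measurable (\<sigma> \<Otimes>\<^sub>M lborel)"
    using f_meas space_\<sigma> by (intro borel_measurable_pair_lborel) auto
  then have "{p \<in> space (\<sigma> \<Otimes>\<^sub>M lborel). \<bar>f (fst p) (snd p)\<bar> \<le> 1} \<in> sets (\<sigma> \<Otimes>\<^sub>M lborel)"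
    by measurable
  then have "(AE x in \<sigma>. AE s in lborel. \<bar>f x s\<bar> \<le> 1) \<longleftrightarrow> (AE s in lborel. AE x in \<sigma>. \<bar>f x s\<bar> \<le> 1)"
    by (rule AE_commute)
  then have "AE x in \<sigma>. AE s in lborel. \<bar>f x s\<bar> \<le> 1"
    using f_bound by simp
  then show ?thesis
    using AE_space
  proof eventually_elim
    case (elim x)
    then show ?case
      using interval_integral_Lipschitz[OF measurable_slice_restrict_space[OF f_meas], of x 1]
      by (simp add: Fint_def space_\<sigma>)
  qed
qed

lemma tendsto_integral_Fint:
  fixes f :: "'a::euclidean_space \<Rightarrow> real \<Rightarrow> real"
  assumes "finite_measure \<sigma>" and sets_\<sigma>: "sets \<sigma> = sets (restrict_space borel \<Omega>)"
    and f_meas: "(\<lambda>p. f (fst p) (snd p)) \<in> borel_measurable (restrict_space borel (\<Omega> \<times> UNIV))"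
    and f_bound: "\<And>t. AE x in \<sigma>. \<bar>f x t\<bar> \<le> 1"
    and \<phi>: "C1c \<Omega> \<phi>"
    and w: "\<And>n. w n \<in> borel_measurable (restrict_space borel \<Omega>)"
    and u: "u \<in> borel_measurable (restrict_space borel \<Omega>)"
    and bound: "\<And>n x. x \<in> \<Omega> \<Longrightarrow> \<bar>w n x\<bar> \<le> K"
    and conv: "AE x in \<sigma>. (\<lambda>n. w n x) \<longlonglongrightarrow> u x"
  shows "(\<lambda>n. \<integral>x. \<phi> x * Fint f x (w n x) \<partial>\<sigma>) \<longlonglongrightarrow> (\<integral>x. \<phi> x * Fint f x (u x) \<partial>\<sigma>)"
proof -
  obtain B where B: "\<And>x. \<bar>\<phi> x\<bar> \<le> B"
    using C1c_bounded[OF \<phi>] by metis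
  have space_\<sigma>: "space \<sigma> = \<Omega>"
    using sets_eq_imp_space_eq[OF sets_\<sigma>] by (simp add: space_restrict_space)
  have meas_\<sigma>: "borel_measurable \<sigma> = borel_measurable (restrict_space borel \<Omega>)"
    by (rule measurable_cong_sets[OF sets_\<sigma> refl])
  have id: "(\<lambda>x. x) \<in> measurable \<sigma> borel"
    by (subst measurable_cong_sets[OF sets_\<sigma> refl]) (simp add: measurable_restrict_space1)
  have joint: "(\<lambda>p. f (fst p) (snd p)) \<in> borel_measurable (\<sigma> \<Otimes>\<^sub>M lborel)"
    using f_meas id space_\<sigma> by (intro borel_measurable_pair_lborel) auto
  have \<phi>_meas: "\<phi> \<in> borel_measurable \<sigma>"
    using measurable_comp[OF id borel_measurable_continuous_onI[OF C1c_continuous(1)[OF \<phi>]]]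
    by (simp add: comp_def)
  show ?thesis
  proof (rule tendsto_integral_Lipschitz_comp_AE[OF \<open>finite_measure \<sigma>\<close>,
        where G="\<lambda>x t. \<phi> x * Fint f x t" and L=B and w=w and u=u])
    show "AE x in \<sigma>. \<forall>s t. \<bar>\<phi> x * Fint f x s - \<phi> x * Fint f x t\<bar> \<le> B * \<bar>s - t\<bar>"
      using AE_Fint_Lipschitz[OF assms(1-4)]
    proof eventually_elim
      case (elim x)
      show ?case
      proof (intro allI)
        fix s t
        have "\<bar>\<phi> x * Fint f x s - \<phi> x * Fint f x t\<bar> = \<bar>\<phi> x\<bar> * \<bar>Fint f x s - Fint f x t\<bar>"
          by (simp add: abs_mult flip: right_diff_distrib)
        also have "\<dots> \<le> B * \<bar>s - t\<bar>"
          using B[of x] elim by (intro mult_mono) auto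
        finally show "\<bar>\<phi> x * Fint f x s - \<phi> x * Fint f x t\<bar> \<le> B * \<bar>s - t\<bar>" .
      qed
    qed
    show "(\<lambda>x. \<phi> x * Fint f x (v x)) \<in> borel_measurable \<sigma>" if "v \<in> borel_measurable \<sigma>" for v
      using \<phi>_meas borel_measurable_interval_integral_param[OF joint that] by (simp add: Fint_def)
    show "\<phi> x * Fint f x 0 = 0" for x
      by (simp add: Fint_def)
    show "\<bar>w n x\<bar> \<le> K" if "x \<in> space \<sigma>" for n x
      using bound that space_\<sigma> by simp
    show "w n \<in> borel_measurable \<sigma>" for n
      unfolding meas_\<sigma> by (rule w)
    show "u \<in> borel_measurable \<sigma>"
      unfolding meas_\<sigma> by (rule u)
  qed (fact conv)
qed

lemma tendsto_integral_Bint_grad: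
  fixes b :: "'a::euclidean_space \<Rightarrow> real \<Rightarrow> 'a"
  assumes b_meas: "(\<lambda>p. b (fst p) (snd p)) \<in> borel_measurable (restrict_space borel (\<Omega> \<times> UNIV))"
    and b_bound: "\<And>x t. x \<in> \<Omega> \<Longrightarrow> norm (b x t) \<le> M"
    and \<phi>: "C1c \<Omega> \<phi>"
    and w: "\<And>n. integrable (lebesgue_on \<Omega>) (w n)" and u: "integrable (lebesgue_on \<Omega>) u"
    and L1: "(\<lambda>n. \<integral>x. \<bar>w n x - u x\<bar> \<partial>lebesgue_on \<Omega>) \<longlonglongrightarrow> 0"
  shows "(\<lambda>n. \<integral>x. Bint b x (w n x) \<bullet> grad \<phi> x \<partial>lebesgue_on \<Omega>)
    \<longlonglongrightarrow> (\<integral>x. Bint b x (u x) \<bullet> grad \<phi> x \<partial>lebesgue_on \<Omega>)"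
proof -
  obtain B where B: "\<And>x. norm (grad \<phi> x) \<le> B"
    using C1c_bounded[OF \<phi>] by metis
  have id: "(\<lambda>x. x) \<in> measurable (lebesgue_on \<Omega>) borel"
    by (intro measurable_restrict_space1 measurable_completion) simp
  have joint: "(\<lambda>p. b (fst p) (snd p)) \<in> borel_measurable (lebesgue_on \<Omega> \<Otimes>\<^sub>M lborel)"
    using b_meas id by (intro borel_measurable_pair_lborel) auto
  have grad_meas: "grad \<phi> \<in> borel_measurable (lebesgue_on \<Omega>)"
    using measurable_comp[OF id borel_measurable_continuous_onI[OF C1c_continuous(2)[OF \<phi>]]]
    by (simp add: comp_def)
  have Lipschitz: "norm (Bint b x s - Bint b x t) \<le> M * \<bar>s - t\<bar>" if "x \<in> \<Omega>" for x s t
    unfolding Bint_def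
    using b_bound[OF that] by (intro interval_integral_Lipschitz measurable_slice_restrict_space[OF b_meas that]) auto
  show ?thesis
  proof (rule tendsto_integral_Lipschitz_comp_L1[where G="\<lambda>x t. Bint b x t \<bullet> grad \<phi> x" and L="M * B" and w=w and u=u])
    show "\<bar>Bint b x s \<bullet> grad \<phi> x - Bint b x t \<bullet> grad \<phi> x\<bar> \<le> M * B * \<bar>s - t\<bar>"
      if "x \<in> space (lebesgue_on \<Omega>)" for x s t
    proof -
      have "\<bar>Bint b x s \<bullet> grad \<phi> x - Bint b x t \<bullet> grad \<phi> x\<bar> \<le> norm (Bint b x s - Bint b x t) * norm (grad \<phi> x)"
        by (metis Cauchy_Schwarz_ineq2 inner_diff_left)
      also have "\<dots> \<le> (M * \<bar>s - t\<bar>) * B"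
        using Lipschitz[of x s t] B[of x] that by (intro mult_mono) (auto intro: order_trans[OF norm_ge_zero])
      finally show ?thesis by (simp add: mult_ac)
    qed
    show "(\<lambda>x. Bint b x (v x) \<bullet> grad \<phi> x) \<in> borel_measurable (lebesgue_on \<Omega>)"
      if "v \<in> borel_measurable (lebesgue_on \<Omega>)" for v
      using grad_meas borel_measurable_interval_integral_param[OF joint that] by (simp add: Bint_def)
  qed (use w u L1 in \<open>auto simp: Bint_def\<close>)
qed

lemma pairing_int_continuous:
  assumes "open \<Omega>" "space \<sigma> = \<Omega>" "continuous_on \<Omega> w"
  shows "pairing_int \<Omega> b f \<sigma> w \<Lambda> \<phi>
    = - (\<integral>x. \<phi> x * Fint f x (w x) \<partial>\<sigma>) - (\<integral>x. Bint b x (w x) \<bullet> grad \<phi> x \<partial>lebesgue_on \<Omega>)"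
proof -
  have "(\<integral>x. \<phi> x * Fint f x (u_lam \<Omega> w \<Lambda> x) \<partial>\<sigma>) = (\<integral>x. \<phi> x * Fint f x (w x) \<partial>\<sigma>)"
    using u_lam_continuous[OF assms(1) _ assms(3)] assms(2) by (intro Bochner_Integration.integral_cong) auto
  then show ?thesis
    unfolding pairing_int_def by simp
qed

theorem lemma8p7:
  fixes \<Omega> :: "'a::euclidean_space set"
    and b :: "'a \<Rightarrow> real \<Rightarrow> 'a"
    and \<mu>p \<mu>m :: "real \<Rightarrow> 'a measure"
    and \<sigma> :: "'a measure"
    and f :: "'a \<Rightarrow> real \<Rightarrow> real"
    and u :: "'a \<Rightarrow> real"
    and v :: "nat \<Rightarrow> 'a \<Rightarrow> real"
    and lam \<Lambda> \<phi> :: "'a \<Rightarrow> real"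
  assumes dim: "DIM('a) \<ge> 2"
    and open_\<Omega>: "open \<Omega>"
    \<comment> \<open>(b1)\<close>
    and b1_meas: "(\<lambda>p. b (fst p) (snd p)) \<in> borel_measurable (restrict_space borel (\<Omega> \<times> UNIV))"
    and b1_bdd: "\<exists>M. \<forall>x\<in>\<Omega>. \<forall>t. norm (b x t) \<le> M"
    \<comment> \<open>(b2)\<close>
    and b2: "AE x in lebesgue_on \<Omega>. continuous_on UNIV (b x)"
    \<comment> \<open>(b3): div b_t = \<mu>p t - \<mu>m t (Jordan decomposition), a finite Radon measure\<close>
    and b3: "\<And>t. div_measure \<Omega> (\<lambda>x. b x t) (\<mu>p t) (\<mu>m t)"
    \<comment> \<open>(b4): \<sigma> = \<Or>_t |div b_t| is a finite Radon measure vanishing on H^{N-1}-null sets\<close>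
    and b4_lub: "is_measure_lub \<Omega> (\<lambda>t E. emeasure (\<mu>p t) E + emeasure (\<mu>m t) E) \<sigma>"
    and b4_fin: "emeasure \<sigma> \<Omega> < \<infinity>"
    and b4_null: "\<And>E. E \<in> sets \<sigma> \<Longrightarrow> hausdorff (real (DIM('a)) - 1) E = 0 \<Longrightarrow> emeasure \<sigma> E = 0"
    \<comment> \<open>f(\<cdot>,t) = d div b_t / d\<sigma>, chosen jointly Borel\<close>
    and f_meas: "(\<lambda>p. f (fst p) (snd p)) \<in> borel_measurable (restrict_space borel (\<Omega> \<times> UNIV))"
    and f_dens: "\<And>t. integrable \<sigma> (\<lambda>x. f x t) \<and>
                  (\<forall>E\<in>sets \<sigma>. (\<integral>x\<in>E. f x t \<partial>\<sigma>) = measure (\<mu>p t) E - measure (\<mu>m t) E)"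
    \<comment> \<open>u \<in> BV \<inter> L^\<infinity>\<close>
    and u_BV: "BV \<Omega> u" and u_Linf: "Linf \<Omega> u"
    and lam_meas: "lam \<in> borel_measurable (restrict_space borel \<Omega>)"
    and lam_range: "\<And>x. x \<in> \<Omega> \<Longrightarrow> 0 \<le> lam x \<and> lam x \<le> 1"
    \<comment> \<open>the approximating sequence\<close>
    and v_smooth: "\<And>n. Cinf \<Omega> (v n) \<and> BV \<Omega> (v n)"
    and v_strict: "strictly_conv \<Omega> v u"
    and v_pointwise: "\<exists>E. hausdorff (real (DIM('a)) - 1) E = 0 \<and>
                        (\<forall>x\<in>\<Omega> - E. (\<lambda>n. v n x) \<longlonglongrightarrow> u_lam \<Omega> u lam x)"
    and v_bound: "\<And>n. n \<ge> 1 \<Longrightarrow> Linf_norm \<Omega> (v n) \<le> ereal (1 + 1 / real n) * Linf_norm \<Omega> u"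
    \<comment> \<open>the test data\<close>
    and \<Lambda>_meas: "\<Lambda> \<in> borel_measurable (restrict_space borel \<Omega>)"
    and \<Lambda>_range: "\<And>x. x \<in> \<Omega> \<Longrightarrow> 0 \<le> \<Lambda> x \<and> \<Lambda> x \<le> 1"
    and \<phi>_C1c: "C1c \<Omega> \<phi>"
  shows "(\<lambda>n. pairing_int \<Omega> b f \<sigma> (v n) \<Lambda> \<phi>) \<longlonglongrightarrow> pairing_int \<Omega> b f \<sigma> u lam \<phi>"
proof -
  note \<sigma> = finite_measure_is_measure_lub[OF b4_lub b4_fin]
  have v_cont: "continuous_on \<Omega> (v n)" for n
    using v_smooth[of n] continuous_on_if_Cinf by blast
  obtain M where M: "\<And>x t. x \<in> \<Omega> \<Longrightarrow> norm (b x t) \<le> M"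
    using b1_bdd by blast
  have f_bound: "AE x in \<sigma>. \<bar>f x t\<bar> \<le> 1" for t
    using b4_lub b4_fin f_dens by (rule AE_abs_divergence_density_le_1)
  have v_conv: "AE x in \<sigma>. (\<lambda>n. v n x) \<longlonglongrightarrow> u_lam \<Omega> u lam x"
    using \<sigma>(2) b4_null v_pointwise by (rule AE_if_hausdorff_null_exception)
  \<comment> \<open>\<open>v_bound\<close> only holds for \<open>n \<ge> 1\<close>, hence the shift to \<open>Suc n\<close>.\<close>
  have v_uniform: "\<bar>v (Suc n) x\<bar> \<le> 2 * real_of_ereal (Linf_norm \<Omega> u)" if "x \<in> \<Omega>" for n x
  proof (rule abs_le_of_Linf_norm_le[OF open_\<Omega> that v_cont v_bound])
    show "Suc n \<ge> 1" "0 < 1 + 1 / real (Suc n)" "1 + 1 / real (Suc n) \<le> 2"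
      by (simp_all add: field_simps)
    show "Linf_norm \<Omega> u < \<infinity>"
      using u_Linf by (simp add: Linf_def)
  qed
  have \<sigma>_term: "(\<lambda>n. \<integral>x. \<phi> x * Fint f x (v (Suc n) x) \<partial>\<sigma>)
      \<longlonglongrightarrow> (\<integral>x. \<phi> x * Fint f x (u_lam \<Omega> u lam x) \<partial>\<sigma>)"
  proof (rule tendsto_integral_Fint[OF \<sigma>(1,2) f_meas f_bound \<phi>_C1c _ _ v_uniform])
    show "v (Suc n) \<in> borel_measurable (restrict_space borel \<Omega>)" for n
      using v_cont by (rule borel_measurable_continuous_on_restrict)
    show "u_lam \<Omega> u lam \<in> borel_measurable (restrict_space borel \<Omega>)"
      using u_Linf by (intro borel_measurable_u_lam lam_meas) (simp_all add: Linf_def borel_open[OF open_\<Omega>])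
    show "AE x in \<sigma>. (\<lambda>n. v (Suc n) x) \<longlonglongrightarrow> u_lam \<Omega> u lam x"
      using v_conv by eventually_elim (rule LIMSEQ_Suc)
  qed
  have leb_term: "(\<lambda>n. \<integral>x. Bint b x (v n x) \<bullet> grad \<phi> x \<partial>lebesgue_on \<Omega>)
      \<longlonglongrightarrow> (\<integral>x. Bint b x (u x) \<bullet> grad \<phi> x \<partial>lebesgue_on \<Omega>)"
  proof (rule tendsto_integral_Bint_grad[OF b1_meas M \<phi>_C1c])
    show "integrable (lebesgue_on \<Omega>) (v n)" for n
      using v_smooth[of n] by (simp add: BV_def)
    show "integrable (lebesgue_on \<Omega>) u"
      using u_BV by (simp add: BV_def)
    show "(\<lambda>n. \<integral>x. \<bar>v n x - u x\<bar> \<partial>lebesgue_on \<Omega>) \<longlonglongrightarrow> 0"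
      using v_strict by (simp add: strictly_conv_def)
  qed
  have "(\<lambda>n. pairing_int \<Omega> b f \<sigma> (v (Suc n)) \<Lambda> \<phi>) \<longlonglongrightarrow> pairing_int \<Omega> b f \<sigma> u lam \<phi>"
    unfolding pairing_int_continuous[OF open_\<Omega> \<sigma>(3) v_cont] pairing_int_def[of \<Omega> b f \<sigma> u]
    by (intro tendsto_diff tendsto_minus \<sigma>_term LIMSEQ_Suc[OF leb_term])
  then show ?thesis
    by (rule LIMSEQ_imp_Suc)
qed

end
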